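(* Let $X$ be a continuous real-valued random variable with compact support, and fix an integer $k \ge 1$. For each $n > k$, let $Z = Z_n$ be the random variable produced by the SMOTE-$k$ procedure (described in the context) from an i.i.d. sample $X_1, \dots, X_n$ drawn from $X$. Then $Z$ converges to $X$ in mean as $n \to \infty$.
   Context: SMOTE-$k$ procedure: given a sample $X_1,\dots,X_n$ of real numbers and a neighbor rank $1 \le k \le n-1$: (1) choose an index $i$ uniformly at random from $\{1,\dots,n\}$; (2) let $X_{i,(k)}$ be the $k$-th nearest neighbor of $X_i$ among the other sample points $\{X_j : j \neq i\}$, i.e. the point realizing the $k$-th smallest of the distances $|X_j - X_i|$, $j \ne i$; (3) draw $\lambda \sim U(0,1)$ independently; (4) output $Z = X_i + \lambda (X_{i,(k)} - X_i)$. The random variable $X$ appearing in the conclusion is taken to be the sample point $X_i$ from which $Z$ is generated (which has the distribution of $X$), so convergence in mean means $E[|Z - X_i|] \to 0$. *)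

theory Defs
  imports "HOL-Probability.Probability"
begin

text \<open>Ties in distance are broken
  by the (stable) sort, i.e. by smaller index; ties have probability zero for an
  atomless distribution anyway.\<close>
definition knn_index :: "(nat \<Rightarrow> real) \<Rightarrow> nat \<Rightarrow> nat \<Rightarrow> nat \<Rightarrow> nat" where
  "knn_index x n k i =
     sort_key (\<lambda>j. \<bar>x j - x i\<bar>) (filter (\<lambda>j. j \<noteq> i) [0..<n]) ! (k - 1)"

definition smote_Z :: "(nat \<Rightarrow> real) \<Rightarrow> nat \<Rightarrow> nat \<Rightarrow> nat \<Rightarrow> real \<Rightarrow> real" where
  "smote_Z x n k i l = x i + l * (x (knn_index x n k i) - x i)"

definition smote_space :: "real measure \<Rightarrow> nat \<Rightarrow> ((nat \<Rightarrow> real) \<times> nat \<times> real) measure" where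
  "smote_space P n =
     PiM {..<n} (\<lambda>_. P) \<Otimes>\<^sub>M
       (measure_pmf (pmf_of_set {..<n}) \<Otimes>\<^sub>M uniform_measure lborel {0..1::real})"

end

theory Submission
  imports Defs
begin

text \<open>Let \<open>d\<^sub>i\<close> be the distance from the sample point \<open>X\<^sub>i\<close> to its \<open>k\<close>-th nearest
  neighbour. Then \<open>\<bar>Z - X\<^sub>i\<bar> = \<lambda> d\<^sub>i\<close>, and since \<open>i\<close> is uniform and independent of the
  sample, the expected error is at most \<open>E (\<Sum>\<^sub>i d\<^sub>i) / n\<close>. The sum is bounded
  deterministically: in sorted order, the \<open>j\<close>-th order statistic has at least \<open>k\<close> other
  sample points between the \<open>(j - k)\<close>-th and the \<open>(j + k)\<close>-th, so its \<open>d\<close> is at most the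
  spread of that window, and the spreads telescope to at most \<open>2k\<close> times the range of the
  sample. For support in \<open>[-R, R]\<close> the expected error is therefore at most \<open>4kR/n\<close>.\<close>

lemma knn_dist_le:
  assumes k: "1 \<le> k" and S: "S \<subseteq> {..<n} - {i}" "k \<le> card S"
    and close: "\<forall>j\<in>S. \<bar>x j - x i\<bar> \<le> w"
  shows "\<bar>x (knn_index x n k i) - x i\<bar> \<le> w"
proof (rule ccontr)
  define f where "f j = \<bar>x j - x i\<bar>" for j
  define L where "L = sort_key f (filter (\<lambda>j. j \<noteq> i) [0..<n])"
  have set_L: "set L = {..<n} - {i}" and sorted_L: "sorted (map f L)"
    unfolding L_def by auto
  have knn: "knn_index x n k i = L ! (k - 1)"
    unfolding knn_index_def L_def f_def ..
  assume "\<not> ?thesis"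
  then have far: "w < f (L ! (k - 1))" unfolding knn f_def by simp
  have "S \<subseteq> (!) L ` {..<k - 1}"
  proof
    fix s assume "s \<in> S"
    then obtain p where p: "p < length L" "L ! p = s"
      using S set_L by (metis in_set_conv_nth subsetD)
    have "p < k - 1"
    proof (rule ccontr)
      assume "\<not> p < k - 1"
      then have "f (L ! (k - 1)) \<le> f s"
        using sorted_nth_mono[OF sorted_L, of "k - 1" p] p by simp
      then show False using far close \<open>s \<in> S\<close> unfolding f_def by force
    qed
    then show "s \<in> (!) L ` {..<k - 1}" using p by auto
  qed
  then have "card S \<le> k - 1"
    using card_image_le[of "{..<k - 1}" "(!) L"] card_mono[of "(!) L ` {..<k - 1}" S] by auto
  then show False using S k by simp
qed

definition knn_candidates :: "nat \<Rightarrow> nat \<Rightarrow> nat \<Rightarrow> nat set set" where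
  "knn_candidates n k i = {S. S \<subseteq> {..<n} - {i} \<and> k \<le> card S}"

text \<open>The distance from \<open>x i\<close> to its \<open>k\<close>-th nearest neighbour, written as a min-max over
  candidate neighbourhoods so that it is visibly measurable in the sample, unlike
  \<^const>\<open>knn_index\<close>, which goes through a sort.\<close>
definition knn_radius :: "(nat \<Rightarrow> real) \<Rightarrow> nat \<Rightarrow> nat \<Rightarrow> nat \<Rightarrow> real" where
  "knn_radius x n k i = (MIN S\<in>knn_candidates n k i. MAX j\<in>S. \<bar>x j - x i\<bar>)"

lemma finite_knn_candidates: "finite (knn_candidates n k i)"
  unfolding knn_candidates_def by (rule finite_subset[of _ "Pow ({..<n} - {i})"]) auto

lemma knn_candidatesD:
  assumes "S \<in> knn_candidates n k i" "1 \<le> k"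
  shows "finite S" "S \<noteq> {}" "S \<subseteq> {..<n} - {i}" "k \<le> card S"
  using assms finite_subset[of S "{..<n}"] unfolding knn_candidates_def by auto

lemma others_in_knn_candidates:
  assumes "k < n"
  shows "{..<n} - {i} \<in> knn_candidates n k i"
proof -
  have "n - 1 \<le> card ({..<n} - {i})"
    by (cases "i < n") (auto simp: card_Diff_singleton_if)
  then show ?thesis using assms unfolding knn_candidates_def by auto
qed

lemma knn_dist_le_knn_radius:
  assumes "1 \<le> k" "k < n"
  shows "\<bar>x (knn_index x n k i) - x i\<bar> \<le> knn_radius x n k i"
proof -
  obtain S where S: "S \<in> knn_candidates n k i"
    and radius: "knn_radius x n k i = (MAX j\<in>S. \<bar>x j - x i\<bar>)"
    using Min_in[OF finite_imageI[OF finite_knn_candidates]] others_in_knn_candidates[OF assms(2)]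
    unfolding knn_radius_def by blast
  show ?thesis
    using knn_candidatesD[OF S assms(1)] unfolding radius by (intro knn_dist_le[OF assms(1)]) auto
qed

lemma knn_radius_nonneg: "1 \<le> k \<Longrightarrow> k < n \<Longrightarrow> 0 \<le> knn_radius x n k i"
  using knn_dist_le_knn_radius[of k n x i] by linarith

lemma knn_radius_le:
  assumes "1 \<le> k" "S \<in> knn_candidates n k i" "\<forall>j\<in>S. \<bar>x j - x i\<bar> \<le> w"
  shows "knn_radius x n k i \<le> w"
proof -
  have "knn_radius x n k i \<le> (MAX j\<in>S. \<bar>x j - x i\<bar>)"
    unfolding knn_radius_def using assms(2) finite_knn_candidates by (intro Min_le) auto
  also have "\<dots> \<le> w"
    using knn_candidatesD[OF assms(2,1)] assms(3) by auto
  finally show ?thesis .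
qed

lemma knn_radius_le_sorted_window:
  assumes k: "1 \<le> k" "k < n" and j: "j < n"
    and ys: "distinct ys" "set ys = {..<n}" "sorted (map x ys)"
  shows "knn_radius x n k (ys ! j) \<le> x (ys ! min (j + k) (n - 1)) - x (ys ! (j - k))"
proof -
  have len: "length ys = n" using ys distinct_card by fastforce
  define W where "W = {j - k..min (j + k) (n - 1)} - {j}"
  have W: "W \<subseteq> {..<n}" using k unfolding W_def by auto
  have inj: "inj_on ((!) ys) {..<n}" using ys len by (simp add: inj_on_nth)
  have "(!) ys ` W \<in> knn_candidates n k (ys ! j)"
  proof -
    have "ys ! l \<in> {..<n} - {ys ! j}" if "l \<in> W" for l
    proof -
      have "l < n" "l \<noteq> j" using that W unfolding W_def by auto
      then show ?thesis using nth_mem[of l ys] nth_eq_iff_index_eq[OF ys(1), of l j] ys(2) len j by auto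
    qed
    then have "(!) ys ` W \<subseteq> {..<n} - {ys ! j}" by (simp add: image_subset_iff)
    moreover have "card ((!) ys ` W) = card W"
      using inj_on_subset[OF inj W] by (rule card_image)
    moreover have "k \<le> card W"
      using j k unfolding W_def by (auto simp: card_Diff_singleton_if)
    ultimately show ?thesis unfolding knn_candidates_def by simp
  qed
  moreover have "\<bar>x (ys ! l) - x (ys ! j)\<bar> \<le> x (ys ! min (j + k) (n - 1)) - x (ys ! (j - k))"
    if "l \<in> W" for l
  proof -
    have mono_at: "x (ys ! a) \<le> x (ys ! b)" if "a \<le> b" "b < n" for a b
      using sorted_nth_mono[OF ys(3), of a b] that len by simp
    define hi where "hi = min (j + k) (n - 1)"
    have "l < n" "j - k \<le> l" "l \<le> hi" "hi < n" "j - k \<le> j" "j \<le> hi"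
      using \<open>l \<in> W\<close> j k unfolding W_def hi_def by auto
    then have "x (ys ! (j - k)) \<le> x (ys ! l)" "x (ys ! l) \<le> x (ys ! hi)"
      "x (ys ! (j - k)) \<le> x (ys ! j)" "x (ys ! j) \<le> x (ys ! hi)"
      using j by (auto intro!: mono_at)
    then show ?thesis unfolding hi_def by arith
  qed
  ultimately show ?thesis by (intro knn_radius_le[OF k(1)]) auto
qed

lemma mono_sum_shift_le:
  fixes u :: "nat \<Rightarrow> real"
  assumes "mono u"
  shows "(\<Sum>j<n. u (j + k) - u j) \<le> real k * (u (n + k) - u 0)"
proof -
  have "(\<Sum>j<n. u (j + k) - u j) = (\<Sum>j<n. \<Sum>d<k. u (Suc (j + d)) - u (j + d))"
    using sum_lessThan_telescope[of "\<lambda>d. u (_ + d)"] by simp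
  also have "\<dots> = (\<Sum>d<k. \<Sum>j<n. u (Suc (j + d)) - u (j + d))"
    by (rule sum.swap)
  also have "\<dots> = (\<Sum>d<k. u (n + d) - u d)"
    using sum_lessThan_telescope[of "\<lambda>j. u (j + _)"] by simp
  also have "\<dots> \<le> (\<Sum>d<k. u (n + k) - u 0)"
    using assms by (intro sum_mono diff_mono) (auto simp: mono_def)
  finally show ?thesis by simp
qed

lemma sum_knn_radius_le:
  assumes k: "1 \<le> k" "k < n" and R: "\<forall>j<n. \<bar>x j\<bar> \<le> R"
  shows "(\<Sum>i<n. knn_radius x n k i) \<le> 4 * real k * R"
proof -
  define ys where "ys = sort_key x [0..<n]"
  have ys: "distinct ys" "set ys = {..<n}" "sorted (map x ys)" "length ys = n"
    unfolding ys_def by auto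
  define z where "z m = x (ys ! min m (n - 1))" for m
  have "mono z"
    using sorted_nth_mono[OF ys(3)] ys(4) k unfolding z_def mono_def by simp
  have z_bound: "\<bar>z m\<bar> \<le> R" for m
    using R ys k nth_mem[of "min m (n - 1)" ys] unfolding z_def by auto
  have "(\<Sum>i<n. knn_radius x n k i) = (\<Sum>j<n. knn_radius x n k (ys ! j))"
    using sum.reindex_bij_betw[OF bij_betw_nth[OF ys(1)], where g = "knn_radius x n k"] ys by simp
  also have "\<dots> \<le> (\<Sum>j<n. z (j + k) - z (j - k))"
    using knn_radius_le_sorted_window[OF k _ ys(1-3)] unfolding z_def by (intro sum_mono) simp
  also have "\<dots> = (\<Sum>j<n. z (j + k) - z j) + (\<Sum>j<n. z (j + k - k) - z (j - k))"
    by (simp add: sum.distrib[symmetric])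
  also have "\<dots> \<le> real k * (2 * R) + real k * (2 * R)"
  proof (rule add_mono)
    have spread: "z b - z a \<le> 2 * R" for a b
      using z_bound[of a] z_bound[of b] by (simp add: abs_le_iff)
    show "(\<Sum>j<n. z (j + k) - z j) \<le> real k * (2 * R)"
      using mono_sum_shift_le[OF \<open>mono z\<close>, where n = n and k = k] mult_left_mono[OF spread, of "real k"]
      by (meson of_nat_0_le_iff order_trans)
    have "mono (\<lambda>m. z (m - k))"
      using \<open>mono z\<close> by (auto simp: mono_def)
    from mono_sum_shift_le[OF this, where n = n and k = k]
    show "(\<Sum>j<n. z (j + k - k) - z (j - k)) \<le> real k * (2 * R)"
      using mult_left_mono[OF spread, of "real k"] by (meson of_nat_0_le_iff order_trans)
  qed
  finally show ?thesis by (simp add: algebra_simps)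
qed

lemma measurable_component_PiM_borel:
  fixes P :: "'a::topological_space measure"
  assumes "sets P = sets borel"
  shows "(\<lambda>x. x j) \<in> borel_measurable (PiM I (\<lambda>_. P))"
proof (cases "j \<in> I")
  case True
  then have "(\<lambda>x. x j) \<in> PiM I (\<lambda>_. P) \<rightarrow>\<^sub>M P" by measurable
  then show ?thesis using measurable_cong_sets[OF refl assms] by blast
next
  case False
  have "(\<lambda>x. x j) \<in> borel_measurable (PiM I (\<lambda>_. P)) \<longleftrightarrow>
      (\<lambda>_. undefined :: 'a) \<in> borel_measurable (PiM I (\<lambda>_. P))"
    using False by (intro measurable_cong) (metis PiE_arb space_PiM)
  then show ?thesis by simp
qed

lemma knn_radius_measurable:
  assumes "sets P = sets borel"
  shows "(\<lambda>x. knn_radius x n k i) \<in> borel_measurable (PiM I (\<lambda>_. P))"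
  unfolding knn_radius_def
proof (intro borel_measurable_Min borel_measurable_Max finite_knn_candidates)
  show "finite S" if "S \<in> knn_candidates n k i" for S
    using that finite_subset[of S "{..<n}"] unfolding knn_candidates_def by auto
  show "(\<lambda>x. \<bar>x j - x i\<bar>) \<in> borel_measurable (PiM I (\<lambda>_. P))" for j
    using measurable_component_PiM_borel[OF assms] by measurable
qed

lemma nn_integral_uniform_unit_le:
  assumes "0 \<le> c"
  shows "(\<integral>\<^sup>+l. ennreal (\<bar>l\<bar> * c) \<partial>uniform_measure lborel {0..1::real}) \<le> ennreal c"
proof -
  let ?U = "uniform_measure lborel {0..1::real}"
  have "AE l in ?U. l \<in> {0..1}" by (rule AE_uniform_measureI) auto
  then have "AE l in ?U. ennreal (\<bar>l\<bar> * c) \<le> ennreal c"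
    by eventually_elim (auto intro!: ennreal_leI mult_left_le_one_le assms)
  then have "(\<integral>\<^sup>+l. ennreal (\<bar>l\<bar> * c) \<partial>?U) \<le> (\<integral>\<^sup>+l. ennreal c \<partial>?U)"
    by (rule nn_integral_mono_AE)
  also have "\<dots> = ennreal c"
    using prob_space.emeasure_space_1[OF prob_space_uniform_measure] by simp
  finally show ?thesis .
qed

lemma nn_integral_smote_space_le:
  assumes P: "prob_space P" and n: "0 < n"
    and g: "\<And>i. (\<lambda>x. g x i) \<in> borel_measurable (PiM {..<n} (\<lambda>_. P))"
    and g_nonneg: "\<And>x i. 0 \<le> g x i"
    and sum_g: "AE x in PiM {..<n} (\<lambda>_. P). (\<Sum>i<n. g x i) \<le> C"
  shows "(\<integral>\<^sup>+\<omega>. ennreal (\<bar>snd (snd \<omega>)\<bar> * g (fst \<omega>) (fst (snd \<omega>))) \<partial>smote_space P n)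
    \<le> ennreal (C / n)"
proof -
  define PX where "PX = PiM {..<n} (\<lambda>_. P)"
  define Q where "Q = measure_pmf (pmf_of_set {..<n})"
  define U where "U = uniform_measure lborel {0..1::real}"
  define H where "H \<omega> = ennreal (\<bar>snd (snd \<omega>)\<bar> * g (fst \<omega>) (fst (snd \<omega>)))"
    for \<omega> :: "(nat \<Rightarrow> real) \<times> nat \<times> real"
  have "prob_space PX" unfolding PX_def using P by (intro prob_space_PiM)
  have "prob_space U" unfolding U_def by (intro prob_space_uniform_measure) auto
  then have "prob_space (Q \<Otimes>\<^sub>M U)" unfolding Q_def by (intro prob_space_pair prob_space_measure_pmf)
  have H_measurable: "H \<in> borel_measurable (PX \<Otimes>\<^sub>M (Q \<Otimes>\<^sub>M U))"
  proof -
    have "(\<lambda>\<omega>. fst (snd \<omega>)) \<in> PX \<Otimes>\<^sub>M (Q \<Otimes>\<^sub>M U) \<rightarrow>\<^sub>M Q"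
      and "(\<lambda>\<omega>. snd (snd \<omega>)) \<in> PX \<Otimes>\<^sub>M (Q \<Otimes>\<^sub>M U) \<rightarrow>\<^sub>M U"
      by measurable
    moreover have "sets Q = sets (count_space UNIV)" "sets U = sets borel"
      unfolding Q_def U_def by simp_all
    ultimately have index: "(\<lambda>\<omega>. fst (snd \<omega>)) \<in> PX \<Otimes>\<^sub>M (Q \<Otimes>\<^sub>M U) \<rightarrow>\<^sub>M count_space UNIV"
      and lambda: "(\<lambda>\<omega>. snd (snd \<omega>)) \<in> borel_measurable (PX \<Otimes>\<^sub>M (Q \<Otimes>\<^sub>M U))"
      using measurable_cong_sets by blast+
    have "(\<lambda>\<omega>. ennreal (\<bar>snd (snd \<omega>)\<bar> * g (fst \<omega>) i)) \<in> borel_measurable (PX \<Otimes>\<^sub>M (Q \<Otimes>\<^sub>M U))"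
      for i
      using lambda measurable_compose[OF measurable_fst g[folded PX_def]]
      by (intro measurable_compose[OF _ measurable_ennreal] borel_measurable_times borel_measurable_abs) simp_all
    from measurable_compose_countable[OF this index] show ?thesis
      unfolding H_def .
  qed
  have inner: "(\<integral>\<^sup>+y. H (x, y) \<partial>(Q \<Otimes>\<^sub>M U)) \<le> ennreal ((\<Sum>i<n. g x i) / n)"
    if "x \<in> space PX" for x
  proof -
    have "(\<integral>\<^sup>+y. H (x, y) \<partial>(Q \<Otimes>\<^sub>M U)) = (\<integral>\<^sup>+i. \<integral>\<^sup>+l. H (x, i, l) \<partial>U \<partial>Q)"
      using sigma_finite_measure.nn_integral_fst[OF prob_space_imp_sigma_finite[OF \<open>prob_space U\<close>]
          measurable_Pair2[OF H_measurable that]]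
      by simp
    also have "\<dots> \<le> (\<integral>\<^sup>+i. ennreal (g x i) \<partial>Q)"
      unfolding H_def U_def by (intro nn_integral_mono) (simp add: nn_integral_uniform_unit_le g_nonneg)
    also have "\<dots> = (\<Sum>i<n. ennreal (g x i)) / of_nat n"
      using n unfolding Q_def by (subst nn_integral_pmf_of_set) auto
    also have "\<dots> = ennreal ((\<Sum>i<n. g x i) / n)"
      using n g_nonneg
      by (simp add: sum_nonneg divide_ennreal ennreal_of_nat_eq_real_of_nat)
    finally show ?thesis .
  qed
  have "(\<integral>\<^sup>+\<omega>. H \<omega> \<partial>(PX \<Otimes>\<^sub>M (Q \<Otimes>\<^sub>M U))) = (\<integral>\<^sup>+x. \<integral>\<^sup>+y. H (x, y) \<partial>(Q \<Otimes>\<^sub>M U) \<partial>PX)"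
    using sigma_finite_measure.nn_integral_fst[OF prob_space_imp_sigma_finite[OF \<open>prob_space (Q \<Otimes>\<^sub>M U)\<close>]
        H_measurable]
    by simp
  also have "\<dots> \<le> (\<integral>\<^sup>+x. ennreal (C / n) \<partial>PX)"
  proof (rule nn_integral_mono_AE)
    show "AE x in PX. (\<integral>\<^sup>+y. H (x, y) \<partial>(Q \<Otimes>\<^sub>M U)) \<le> ennreal (C / n)"
      using sum_g AE_space unfolding PX_def[symmetric]
    proof eventually_elim
      case (elim x)
      then have "ennreal ((\<Sum>i<n. g x i) / n) \<le> ennreal (C / n)"
        by (intro ennreal_leI divide_right_mono) auto
      with inner[OF elim(2)] show ?case by (rule order_trans)
    qed
  qed
  also have "\<dots> = ennreal (C / n)"
    using prob_space.emeasure_space_1[OF \<open>prob_space PX\<close>] by simp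
  finally show ?thesis
    unfolding H_def smote_space_def PX_def Q_def U_def .
qed

lemma smote_error_le:
  assumes P: "prob_space P" "sets P = sets borel" and R: "AE y in P. \<bar>y\<bar> \<le> R"
    and k: "1 \<le> k" "k < n"
  shows "(\<integral>\<omega>. \<bar>smote_Z (fst \<omega>) n k (fst (snd \<omega>)) (snd (snd \<omega>)) - fst \<omega> (fst (snd \<omega>))\<bar>
      \<partial>smote_space P n) \<le> 4 * real k * R / real n"
proof -
  have "AE y in P. 0 \<le> R" using R by eventually_elim auto
  then have "0 \<le> R" using prob_space.AE_const[OF P(1)] by blast
  have "\<bar>smote_Z x n k i l - x i\<bar> \<le> \<bar>l\<bar> * knn_radius x n k i" for x i l
    unfolding smote_Z_def abs_mult[symmetric, of l]
    using knn_dist_le_knn_radius[OF k] by (simp add: abs_mult mult_left_mono)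
  \<comment> \<open>The error is not known to be measurable, so only its nonnegative integral is bounded;
    \<open>integral_real_bounded\<close> then covers the non-integrable case as well.\<close>
  then have "(\<integral>\<^sup>+\<omega>. ennreal \<bar>smote_Z (fst \<omega>) n k (fst (snd \<omega>)) (snd (snd \<omega>)) - fst \<omega> (fst (snd \<omega>))\<bar>
      \<partial>smote_space P n)
    \<le> (\<integral>\<^sup>+\<omega>. ennreal (\<bar>snd (snd \<omega>)\<bar> * knn_radius (fst \<omega>) n k (fst (snd \<omega>))) \<partial>smote_space P n)"
    by (intro nn_integral_mono ennreal_leI)
  also have "\<dots> \<le> ennreal (4 * real k * R / real n)"
  proof (rule nn_integral_smote_space_le[OF P(1)])
    have "AE x in PiM {..<n} (\<lambda>_. P). \<forall>j\<in>{..<n}. \<bar>x j\<bar> \<le> R"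
      using P(1) R by (intro eventually_ball_finite ballI AE_PiM_component) auto
    then show "AE x in PiM {..<n} (\<lambda>_. P). (\<Sum>i<n. knn_radius x n k i) \<le> 4 * real k * R"
      by eventually_elim (rule sum_knn_radius_le[OF k], auto)
  qed (use k knn_radius_nonneg knn_radius_measurable[OF P(2)] in auto)
  finally show ?thesis
    using \<open>0 \<le> R\<close> by (intro integral_real_bounded) auto
qed

theorem theorem3:
  fixes P :: "real measure" and k :: nat
  assumes "prob_space P"
    and "sets P = sets borel"
    and "\<forall>x. measure P {x} = 0"
    and "\<exists>K. compact K \<and> emeasure P K = 1"
    and "k \<ge> 1"
  shows "(\<lambda>n. \<integral>\<omega>. \<bar>smote_Z (fst \<omega>) n k (fst (snd \<omega>)) (snd (snd \<omega>)) - fst \<omega> (fst (snd \<omega>))\<bar>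
              \<partial>smote_space P n) \<longlonglongrightarrow> 0"
proof -
  obtain K where K: "compact K" "emeasure P K = 1" using assms(4) by blast
  then obtain R where R: "\<forall>y\<in>K. \<bar>y\<bar> \<le> R"
    using compact_imp_bounded bounded_real by blast
  have "K \<in> sets P" using assms(2) compact_imp_closed[OF K(1)] by simp
  then have "AE y in P. y \<in> K"
    using prob_space.AE_in_set_eq_1[OF assms(1)] K(2) by (simp add: measure_def)
  then have bounded: "AE y in P. \<bar>y\<bar> \<le> R" using R by (auto elim: eventually_mono)
  have "eventually (\<lambda>n. (\<integral>\<omega>. \<bar>smote_Z (fst \<omega>) n k (fst (snd \<omega>)) (snd (snd \<omega>)) - fst \<omega> (fst (snd \<omega>))\<bar>
      \<partial>smote_space P n) \<le> 4 * real k * R / real n) sequentially"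
    using eventually_gt_at_top[of k] by eventually_elim (intro smote_error_le assms(1,2,5) bounded)
  then show ?thesis
    by (intro tendsto_sandwich[OF _ _ tendsto_const lim_const_over_n]) auto
qed

end
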